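(* $$\frac{1}{(q)_\infty^3}\sum_{i,j,k\in\mathbb Z}(-1)^{i+j+k}q^{\binom{i+j+k}{2}+i^2+j^2+k^2}=\frac{(q^4;q^4)_\infty(q^{20};q^{20})_\infty}{(q)_\infty^2}\sum_{a=0}^{1}(-q)^a\,[-q^{2-2a};q^4]_\infty\,[q^{4+2a};q^{20}]_\infty\,[q^{12-4a};q^{40}]_\infty.$$
   Context: $q$ is complex with $0<|q|<1$. $(a;q)_\infty=\prod_{j\ge0}(1-aq^j)$, $(q)_\infty=(q;q)_\infty$, $[z;q]_\infty:=(z;q)_\infty(q/z;q)_\infty$, $\binom{x}{2}=x(x-1)/2$. *)

theory Defs
  imports "HOL-Analysis.Analysis"
begin

definition qpoch_inf :: "complex \<Rightarrow> complex \<Rightarrow> complex" where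
  "qpoch_inf a q = (\<Prod>j. (1 - a * q ^ j))"

definition qpoch :: "complex \<Rightarrow> complex" where
  "qpoch q = qpoch_inf q q"

definition qtheta :: "complex \<Rightarrow> complex \<Rightarrow> complex" where
  "qtheta z q = qpoch_inf z q * qpoch_inf (q / z) q"

definition binom2 :: "int \<Rightarrow> int" where
  "binom2 x = x * (x - 1) div 2"

end

theory Submission
  imports Defs
begin

(* Everything rests on Jacobi's triple product identity, which is proved first: the finite
   q-binomial theorem gives a finite version whose coefficients are central Gaussian binomial
   coefficients, and Tannery's theorem passes to the limit.

   Summing the left-hand side over k first, the exponent is
   (i+j choose 2) + i^2 + j^2 + 3 (k choose 2) + (i+j+1) k, so the inner sum is the cubic theta
   sum E_c = sum_k (-1)^k q^(3 (k choose 2) + c k) with c = i+j+1.  By the triple product in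
   base q^3, E_c vanishes for 3 | c and is a signed monomial times (q)_inf otherwise; this
   cancels one factor (q)_inf.  The remaining (i,j)-sum is split by the parity of i+j and
   parametrised by (i,j) = (-N-m, m-N) resp. (N+1-m, N+m).  On each class the summand factors
   into a theta term in m (base q^4) and a coefficient sequence in N; the latter sums to a
   product of theta functions in bases q^20 and q^40, because the product of the two triple
   products, re-indexed by (m,k) -> (m-2k,k), collapses to it after the inner k-sum (again a
   cubic theta sum, now in q^40). *)

definition qfact :: "complex \<Rightarrow> nat \<Rightarrow> complex" where
  "qfact p n = (\<Prod>j<n. 1 - p ^ Suc j)"

definition qbinom :: "complex \<Rightarrow> nat \<Rightarrow> nat \<Rightarrow> complex" where
  "qbinom p N k = (if k \<le> N then qfact p N / (qfact p k * qfact p (N - k)) else 0)"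

lemma power_neq_one:
  fixes p :: complex
  assumes "norm p < 1" "n > 0"
  shows "p ^ n \<noteq> 1"
proof
  assume "p ^ n = 1"
  hence "norm p ^ n = 1" by (metis norm_one norm_power)
  moreover have "norm p ^ n < 1" using assms by (simp add: power_less_one_iff)
  ultimately show False by simp
qed

lemma qfact_nonzero: "norm p < 1 \<Longrightarrow> qfact p n \<noteq> 0"
  unfolding qfact_def using power_neq_one[of p "Suc _"] by (auto simp: prod_zero_iff)

lemma qbinom_0 [simp]: "norm p < 1 \<Longrightarrow> qbinom p N 0 = 1"
  using qfact_nonzero[of p] by (simp add: qbinom_def qfact_def)

lemma qbinom_diag: "norm p < 1 \<Longrightarrow> qbinom p N N = 1"
  using qfact_nonzero[of p] by (simp add: qbinom_def qfact_def)

lemma qbinom_symmetric: "k \<le> N \<Longrightarrow> qbinom p N (N - k) = qbinom p N k"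
  by (simp add: qbinom_def mult.commute)

lemma qbinom_pascal:
  assumes p: "norm p < 1" and k: "k \<le> N"
  shows "qbinom p (Suc N) (Suc k) = qbinom p N (Suc k) + p ^ (N - k) * qbinom p N k"
proof (cases "k = N")
  case True
  thus ?thesis using qbinom_diag[OF p] by (simp add: qbinom_def)
next
  case False
  define m where "m = N - Suc k"
  have N: "N = m + Suc k" and diffs: "Suc N - Suc k = Suc m" "N - k = Suc m" "N - Suc k = m"
    using k False m_def by auto
  have a: "qfact p k \<noteq> 0" "qfact p m \<noteq> 0" "1 - p ^ Suc k \<noteq> 0" "1 - p ^ Suc m \<noteq> 0"
    using qfact_nonzero[OF p] power_neq_one[OF p, of "Suc k"] power_neq_one[OF p, of "Suc m"] by auto
  have field_identity: "C * c / ((A * a) * (B * b)) = C / ((A * a) * B) + x * (C / (A * (B * b)))"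
    if "A \<noteq> 0" "B \<noteq> 0" "a \<noteq> 0" "b \<noteq> 0" "c = b + x * a" for A B C a b c x :: complex
    using that by (simp add: field_simps)
  \<comment> \<open>the q-analogue of N + 1 = (m + 1) + (k + 1), on which Pascal's rule rests\<close>
  have split: "1 - p ^ Suc N = (1 - p ^ Suc m) + p ^ Suc m * (1 - p ^ Suc k)"
    unfolding N by (simp add: algebra_simps power_add)
  have "qbinom p (Suc N) (Suc k)
      = qfact p N * (1 - p ^ Suc N) / ((qfact p k * (1 - p ^ Suc k)) * (qfact p m * (1 - p ^ Suc m)))"
    using k False by (simp add: qbinom_def qfact_def diffs)
  also have "\<dots> = qfact p N / ((qfact p k * (1 - p ^ Suc k)) * qfact p m)
       + p ^ Suc m * (qfact p N / (qfact p k * (qfact p m * (1 - p ^ Suc m))))"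
    by (rule field_identity) (use a split in simp_all)
  also have "\<dots> = qbinom p N (Suc k) + p ^ (N - k) * qbinom p N k"
    using k False by (simp add: qbinom_def qfact_def diffs)
  finally show ?thesis .
qed

lemma Suc_choose_two: "Suc k choose 2 = (k choose 2) + k"
  by (simp add: numeral_2_eq_2)

lemma zero_choose_two: "0 choose 2 = 0"
  by (simp add: numeral_2_eq_2)

lemma q_binomial_theorem:
  assumes p: "norm p < 1"
  shows "(\<Prod>j<N. 1 + w * p ^ j) = (\<Sum>k\<le>N. qbinom p N k * p ^ (k choose 2) * w ^ k)"
proof (induction N)
  case 0
  then show ?case using p by (simp add: zero_choose_two)
next
  case (Suc N)
  define c where "c = (\<lambda>k. p ^ (Suc k choose 2) * w ^ Suc k)"
  have shift: "(\<Sum>k\<le>Suc N. f k * p ^ (k choose 2) * w ^ k) = f 0 + (\<Sum>k\<le>N. f (Suc k) * c k)" for f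
    unfolding c_def by (subst sum.atMost_Suc_shift) (simp add: numeral_2_eq_2 mult.assoc)
  have lower_shifted: "(\<Sum>k\<le>N. qbinom p N k * p ^ (k choose 2) * w ^ k) = 1 + (\<Sum>k\<le>N. qbinom p N (Suc k) * c k)"
    using shift[of "qbinom p N"] p by (simp add: qbinom_def[of p N "Suc N"] zero_choose_two)
  have upper_shifted: "(\<Sum>k\<le>N. qbinom p N k * p ^ (k choose 2) * w ^ k * (w * p ^ N))
      = (\<Sum>k\<le>N. p ^ (N - k) * qbinom p N k * c k)"
  proof (intro sum.cong refl)
    fix k assume "k \<in> {..N}"
    hence "p ^ N = p ^ (N - k) * p ^ k" by (simp flip: power_add)
    thus "qbinom p N k * p ^ (k choose 2) * w ^ k * (w * p ^ N) = p ^ (N - k) * qbinom p N k * c k"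
      by (simp add: c_def Suc_choose_two power_add)
  qed
  have "(\<Prod>j<Suc N. 1 + w * p ^ j) = (\<Sum>k\<le>N. qbinom p N k * p ^ (k choose 2) * w ^ k) * (1 + w * p ^ N)"
    using Suc by simp
  also have "\<dots> = (\<Sum>k\<le>N. qbinom p N k * p ^ (k choose 2) * w ^ k)
        + (\<Sum>k\<le>N. qbinom p N k * p ^ (k choose 2) * w ^ k * (w * p ^ N))"
    by (simp add: distrib_left sum_distrib_right)
  also have "\<dots> = 1 + (\<Sum>k\<le>N. (qbinom p N (Suc k) + p ^ (N - k) * qbinom p N k) * c k)"
    unfolding lower_shifted upper_shifted by (simp add: sum.distrib algebra_simps)
  also have "\<dots> = 1 + (\<Sum>k\<le>N. qbinom p (Suc N) (Suc k) * c k)"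
    by (simp add: qbinom_pascal[OF p])
  also have "\<dots> = (\<Sum>k\<le>Suc N. qbinom p (Suc N) k * p ^ (k choose 2) * w ^ k)"
    using shift[of "qbinom p (Suc N)"] p by simp
  finally show ?case .
qed

(* Arithmetic of the integer binomial coefficient binom2 x = x(x-1)/2; all exponent identities
   below reduce to polynomial identities via binom2_double. *)

lemma binom2_double: "2 * binom2 x = x * (x - 1)"
proof -
  have "even (x * (x - 1))" by auto
  thus ?thesis unfolding binom2_def by simp
qed

lemma binom2_of_nat: "binom2 (int k) = int (k choose 2)"
  by (cases k) (simp_all add: binom2_def choose_two zdiv_int algebra_simps)

lemma binom2_nonneg: "binom2 x \<ge> 0"
proof -
  have "x * (x - 1) \<ge> 0"
    by (cases "x \<ge> 1") (auto simp: mult_nonpos_nonpos intro: mult_nonneg_nonneg)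
  thus ?thesis using binom2_double[of x] by simp
qed

lemma prod_lessThan_add:
  fixes f :: "nat \<Rightarrow> 'a::comm_monoid_mult"
  shows "(\<Prod>j<n + m. f j) = (\<Prod>j<n. f j) * (\<Prod>j<m. f (n + j))"
  by (induction m) (auto simp: mult.assoc)

(* Multiplying out the 2n factors of the q-binomial product at w = z / p^n: the first n
   factors, read backwards, turn into the factors 1 + p^(j+1)/z up to a monomial. *)
lemma qbinom_product_recentred:
  fixes p z :: complex
  assumes p: "p \<noteq> 0" and z: "z \<noteq> 0"
  shows "(\<Prod>j<2*n. 1 + z / p ^ n * p ^ j)
       = z ^ n / p ^ (Suc n choose 2) * (\<Prod>j<n. (1 + z * p ^ j) * (1 + p ^ Suc j / z))"
proof -
  define w where "w = z / p ^ n"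
  have "(\<Prod>j<2*n. 1 + w * p ^ j) = (\<Prod>j<n. 1 + w * p ^ j) * (\<Prod>j<n. 1 + w * p ^ (n + j))"
    using prod_lessThan_add[of "\<lambda>j. 1 + w * p ^ j" n n] by (simp add: mult_2)
  also have "(\<Prod>j<n. 1 + w * p ^ j) = (\<Prod>j<n. 1 + w * p ^ (n - Suc j))"
    by (rule prod.nat_diff_reindex[symmetric])
  also have "(\<Prod>j<n. 1 + w * p ^ (n + j)) = (\<Prod>j<n. 1 + z * p ^ j)"
  proof (intro prod.cong refl)
    fix j
    show "1 + w * p ^ (n + j) = 1 + z * p ^ j" unfolding w_def using p by (simp add: power_add)
  qed
  also have "(\<Prod>j<n. 1 + w * p ^ (n - Suc j)) = (\<Prod>j<n. z / p ^ Suc j * (1 + p ^ Suc j / z))"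
  proof (intro prod.cong refl)
    fix j assume "j \<in> {..<n}"
    hence "n = (n - Suc j) + Suc j" by simp
    hence "p ^ n = p ^ (n - Suc j) * p ^ Suc j" by (metis power_add)
    thus "1 + w * p ^ (n - Suc j) = z / p ^ Suc j * (1 + p ^ Suc j / z)"
      unfolding w_def using p z by (simp add: field_simps)
  qed
  also have "\<dots> = (\<Prod>j<n. z / p ^ Suc j) * (\<Prod>j<n. 1 + p ^ Suc j / z)"
    by (rule prod.distrib)
  also have "(\<Prod>j<n. z / p ^ Suc j) = z ^ n / p ^ (\<Sum>j<n. Suc j)"
    by (simp only: prod_dividef prod_constant card_lessThan power_sum)
  also have "(\<Sum>j<n. Suc j) = Suc n choose 2"
    by (induction n) (simp_all add: Suc_choose_two)
  finally show ?thesis unfolding w_def by (simp add: prod.distrib mult_ac)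
qed

definition theta_term :: "complex \<Rightarrow> complex \<Rightarrow> int \<Rightarrow> complex" where
  "theta_term z p l = z powi l * p powi binom2 l"

lemma theta_term_recentred:
  fixes p z :: complex
  assumes p: "p \<noteq> 0" and z: "z \<noteq> 0"
  shows "p ^ (k choose 2) * (z / p ^ n) ^ k = z ^ n / p ^ (Suc n choose 2) * theta_term z p (int k - int n)"
proof -
  define l where "l = int k - int n"
  have exponent: "int (k choose 2) - int n * int k = binom2 l - int (Suc n choose 2)"
    using binom2_double[of l] binom2_double[of "int k", unfolded binom2_of_nat]
      binom2_double[of "int (Suc n)", unfolded binom2_of_nat, unfolded of_nat_Suc]
    unfolding l_def by algebra
  have "p ^ (k choose 2) * (z / p ^ n) ^ k = z ^ k * p ^ (k choose 2) / p ^ (n * k)"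
    by (simp add: power_divide power_mult)
  also have "\<dots> = z powi int k * p powi (int (k choose 2) - int n * int k)"
    using p by (simp add: power_int_diff flip: of_nat_mult)
  also have "\<dots> = z powi int n * z powi l * p powi (binom2 l - int (Suc n choose 2))"
    using power_int_add[of z "int n" l] z unfolding exponent l_def by simp
  also have "\<dots> = z ^ n / p ^ (Suc n choose 2) * theta_term z p l"
    unfolding theta_term_def using p by (simp add: power_int_diff)
  finally show ?thesis unfolding l_def .
qed

lemma sum_int_sym_split:
  fixes g :: "int \<Rightarrow> 'a::comm_monoid_add"
  shows "(\<Sum>l\<in>{-int n..int n}. g l) = (\<Sum>k\<le>n. g (int k)) + (\<Sum>k<n. g (- int k - 1))"
proof -
  have U: "{-int n..int n} = int ` {..n} \<union> (\<lambda>k. - int k - 1) ` {..<n}"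
  proof (rule set_eqI, rule iffI)
    fix x assume x: "x \<in> {-int n..int n}"
    show "x \<in> int ` {..n} \<union> (\<lambda>k. - int k - 1) ` {..<n}"
    proof (cases "x \<ge> 0")
      case True thus ?thesis using x by (intro UnI1 image_eqI[where x="nat x"]) auto
    next
      case False thus ?thesis using x by (intro UnI2 image_eqI[where x="nat (-x-1)"]) auto
    qed
  qed auto
  have "inj_on int {..n}" "inj_on (\<lambda>k::nat. - int k - 1) {..<n}" by (auto simp: inj_on_def)
  thus ?thesis unfolding U
    by (subst sum.union_disjoint) (auto simp: sum.reindex o_def)
qed

(* Finite Jacobi triple product: the coefficient of z^l is a central Gaussian binomial
   coefficient, which tends to 1/(p;p)_inf as n grows. *)
lemma finite_jacobi_triple_product:
  fixes p z :: complex
  assumes p: "norm p < 1" "p \<noteq> 0" and z: "z \<noteq> 0"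
  shows "(\<Prod>j<n. (1 + z * p ^ j) * (1 + p ^ Suc j / z))
       = (\<Sum>l\<in>{-int n..int n}. qbinom p (2*n) (n + nat \<bar>l\<bar>) * theta_term z p l)"
proof -
  define K where "K = z ^ n / p ^ (Suc n choose 2)"
  have "K \<noteq> 0" unfolding K_def using p z by simp
  have "K * (\<Prod>j<n. (1 + z * p ^ j) * (1 + p ^ Suc j / z)) = (\<Prod>j<2*n. 1 + z / p ^ n * p ^ j)"
    unfolding K_def by (rule qbinom_product_recentred[OF p(2) z, symmetric])
  also have "\<dots> = (\<Sum>k\<le>2*n. qbinom p (2*n) k * (p ^ (k choose 2) * (z / p ^ n) ^ k))"
    unfolding q_binomial_theorem[OF p(1)] by (simp add: mult.assoc)
  also have "\<dots> = (\<Sum>k\<le>2*n. K * (qbinom p (2*n) k * theta_term z p (int k - int n)))"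
    unfolding K_def theta_term_recentred[OF p(2) z] by (simp add: mult_ac)
  also have "\<dots> = (\<Sum>l\<in>{-int n..int n}. K * (qbinom p (2*n) (nat (int n + l)) * theta_term z p l))"
    by (rule sum.reindex_bij_witness[where i="\<lambda>l. nat (int n + l)" and j="\<lambda>k. int k - int n"]) auto
  also have "\<dots> = K * (\<Sum>l\<in>{-int n..int n}. qbinom p (2*n) (n + nat \<bar>l\<bar>) * theta_term z p l)"
  proof (subst sum_distrib_left, intro sum.cong refl)
    fix l assume "l \<in> {-int n..int n}"
    hence "nat (int n + l) = n + nat \<bar>l\<bar> \<or> nat (int n + l) = 2*n - (n + nat \<bar>l\<bar>) \<and> n + nat \<bar>l\<bar> \<le> 2*n"
      by auto
    hence "qbinom p (2*n) (nat (int n + l)) = qbinom p (2*n) (n + nat \<bar>l\<bar>)"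
      using qbinom_symmetric by metis
    thus "K * (qbinom p (2*n) (nat (int n + l)) * theta_term z p l)
        = K * (qbinom p (2*n) (n + nat \<bar>l\<bar>) * theta_term z p l)" by simp
  qed
  finally show ?thesis using \<open>K \<noteq> 0\<close> by simp
qed

lemma qpoch_inf_convergent: "norm q < 1 \<Longrightarrow> convergent_prod (\<lambda>j. 1 - a * q ^ j :: complex)"
proof -
  assume q: "norm q < 1"
  have "summable (\<lambda>j. norm a * norm q ^ j)"
    using q by (intro summable_mult summable_geometric) auto
  hence "summable (\<lambda>j. norm ((1 - a * q ^ j) - 1))" by (simp add: norm_mult norm_power)
  thus ?thesis
    by (intro abs_convergent_prod_imp_convergent_prod summable_imp_abs_convergent_prod)
qed

lemma qpoch_inf_LIMSEQ:
  "norm q < 1 \<Longrightarrow> (\<lambda>n. \<Prod>j<n. 1 - a * q ^ j :: complex) \<longlonglongrightarrow> qpoch_inf a q"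
  unfolding qpoch_inf_def LIMSEQ_lessThan_iff_atMost
  by (rule convergent_prod_LIMSEQ) (rule qpoch_inf_convergent)

lemma qpoch_inf_nonzero:
  assumes "norm q < 1" "\<And>j. a * q ^ j \<noteq> 1"
  shows "qpoch_inf a q \<noteq> 0"
  unfolding qpoch_inf_def
  by (rule prodinf_nonzero[OF qpoch_inf_convergent[OF assms(1)]]) (use assms(2) in auto)

lemma qpoch_inf_self_nonzero: "norm q < 1 \<Longrightarrow> qpoch_inf q q \<noteq> 0"
  by (rule qpoch_inf_nonzero) (use power_neq_one[of q "Suc _"] in auto)

lemma qpoch_nonzero: "norm q < 1 \<Longrightarrow> qpoch q \<noteq> 0"
  unfolding qpoch_def by (rule qpoch_inf_self_nonzero)

lemma qpoch_inf_one: "norm q < 1 \<Longrightarrow> qpoch_inf 1 q = 0"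
proof -
  assume q: "norm q < 1"
  have "(\<lambda>j. 1 - 1 * q ^ j) has_prod qpoch_inf 1 q" unfolding qpoch_inf_def
    by (rule convergent_prod_has_prod[OF qpoch_inf_convergent[OF q]])
  thus ?thesis by (rule has_prod_zeroI[where n=0]) simp
qed

lemma qpoch_inf_mod3_split:
  assumes r: "norm r < 1"
  shows "qpoch_inf (r^3) (r^3) * qpoch_inf r (r^3) * qpoch_inf (r^2) (r^3) = qpoch_inf r r"
proof -
  have r3: "norm (r^3) < 1" using r by (simp add: norm_power power_less_one_iff)
  have partial: "(\<Prod>j<n. 1 - r^3 * (r^3)^j) * (\<Prod>j<n. 1 - r * (r^3)^j) * (\<Prod>j<n. 1 - r^2 * (r^3)^j)
        = (\<Prod>i<3*n. 1 - r * r^i)" for n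
  proof (induction n)
    case (Suc n)
    have "(r^3)^n = r^(3*n)" by (simp add: power_mult)
    hence "r * r^(3*n) = r * (r^3)^n" "r * r^Suc (3*n) = r^2 * (r^3)^n" "r * r^Suc (Suc (3*n)) = r^3 * (r^3)^n"
      by (simp_all add: power2_eq_square power3_eq_cube)
    moreover have "3 * Suc n = Suc (Suc (Suc (3*n)))" by simp
    ultimately have "(\<Prod>i<3 * Suc n. 1 - r * r^i)
        = (\<Prod>i<3*n. 1 - r * r^i) * ((1 - r^3 * (r^3)^n) * (1 - r * (r^3)^n) * (1 - r^2 * (r^3)^n))"
      by (simp only: prod.lessThan_Suc mult_ac)
    thus ?case using Suc by (simp add: mult_ac)
  qed simp
  have "(\<lambda>n. (\<Prod>j<n. 1 - r^3 * (r^3)^j) * (\<Prod>j<n. 1 - r * (r^3)^j) * (\<Prod>j<n. 1 - r^2 * (r^3)^j))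
     \<longlonglongrightarrow> qpoch_inf (r^3) (r^3) * qpoch_inf r (r^3) * qpoch_inf (r^2) (r^3)"
    by (intro tendsto_mult qpoch_inf_LIMSEQ r3)
  moreover have "(\<lambda>n. \<Prod>i<3*n. 1 - r * r^i) \<longlonglongrightarrow> qpoch_inf r r"
    by (rule filterlim_compose[OF qpoch_inf_LIMSEQ[OF r] mult_nat_left_at_top]) simp
  ultimately show ?thesis unfolding partial using LIMSEQ_unique by blast
qed

lemma summable_quadratic_power:
  fixes r Y :: real
  assumes r: "0 \<le> r" "r < 1" and Y: "0 \<le> Y"
  shows "summable (\<lambda>k. r ^ (k choose 2) * Y ^ k)"
proof -
  have "(\<lambda>n. r ^ n * Y) \<longlonglongrightarrow> 0 * Y"
    using r by (intro tendsto_mult LIMSEQ_power_zero) auto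
  hence "eventually (\<lambda>n. r ^ n * Y < 1/2) sequentially"
    by (intro order_tendstoD) auto
  then obtain N0 where N0: "\<And>n. n \<ge> N0 \<Longrightarrow> r ^ n * Y < 1/2"
    by (auto simp: eventually_sequentially)
  show ?thesis
  proof (rule summable_ratio_test[where c="1/2" and N=N0])
    fix n assume n: "n \<ge> N0"
    have "norm (r ^ (Suc n choose 2) * Y ^ Suc n) = (r ^ n * Y) * (r ^ (n choose 2) * Y ^ n)"
      using r Y by (simp add: Suc_choose_two power_add abs_mult mult_ac)
    also have "\<dots> \<le> 1/2 * (r ^ (n choose 2) * Y ^ n)"
      using N0[OF n] r Y by (intro mult_right_mono) auto
    also have "\<dots> = 1/2 * norm (r ^ (n choose 2) * Y ^ n)" using r Y by simp
    finally show "norm (r ^ (Suc n choose 2) * Y ^ Suc n) \<le> 1/2 * norm (r ^ (n choose 2) * Y ^ n)" .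
  qed simp
qed

lemma has_sum_int_split:
  fixes f :: "int \<Rightarrow> 'a::banach"
  assumes pos: "summable (\<lambda>k. norm (f (int k)))" and neg: "summable (\<lambda>k. norm (f (- int k - 1)))"
  shows "(f has_sum ((\<Sum>k. f (int k)) + (\<Sum>k. f (- int k - 1)))) UNIV"
proof -
  have "((\<lambda>k. f (int k)) has_sum (\<Sum>k. f (int k))) UNIV"
    by (rule norm_summable_imp_has_sum[OF pos summable_sums[OF summable_norm_cancel[OF pos]]])
  hence A: "(f has_sum (\<Sum>k. f (int k))) (range int)"
    using has_sum_reindex[of int UNIV f] by (simp add: o_def)
  have "((\<lambda>k. f (- int k - 1)) has_sum (\<Sum>k. f (- int k - 1))) UNIV"
    by (rule norm_summable_imp_has_sum[OF neg summable_sums[OF summable_norm_cancel[OF neg]]])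
  moreover have "inj (\<lambda>k::nat. - int k - 1)" by (auto simp: inj_def)
  ultimately have B: "(f has_sum (\<Sum>k. f (- int k - 1))) (range (\<lambda>k::nat. - int k - 1))"
    using has_sum_reindex[of "\<lambda>k::nat. - int k - 1" UNIV f] by (simp add: o_def)
  have "range int \<union> range (\<lambda>k::nat. - int k - 1) = UNIV"
  proof (intro set_eqI iffI)
    fix x :: int
    show "x \<in> range int \<union> range (\<lambda>k::nat. - int k - 1)"
      by (cases "x \<ge> 0") (auto intro: image_eqI[where x="nat x"] image_eqI[where x="nat (-x-1)"])
  qed simp
  thus ?thesis using has_sum_Un_disjoint[OF A B] by fastforce
qed

lemma theta_term_norm: "norm (theta_term z p (int k)) = norm p ^ (k choose 2) * norm z ^ k"
  unfolding theta_term_def by (simp add: norm_mult norm_power binom2_of_nat)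

lemma theta_term_reflect:
  assumes "p \<noteq> 0" "z \<noteq> 0"
  shows "theta_term z p (- int k - 1) = p / z * theta_term (p^2 / z) p (int k)"
proof -
  have e: "binom2 (- int k - 1) = binom2 (int k) + int (2 * k + 1)"
    using binom2_double[of "- int k - 1"] binom2_double[of "int k"] by simp algebra
  have z: "z powi (- int k - 1) = inverse (z ^ Suc k)"
    by (metis minus_diff_eq diff_minus_eq_add of_nat_Suc power_int_minus power_int_of_nat)
  have p: "p powi (binom2 (int k) + int (2 * k + 1)) = p powi binom2 (int k) * p ^ (2 * k + 1)"
    by (metis assms(1) power_int_add power_int_of_nat)
  show ?thesis
    unfolding theta_term_def e z p using assms
    by (simp add: power_mult field_simps) (metis power_mult mult.commute)
qed

lemma theta_term_summable:
  assumes p: "norm p < 1" "p \<noteq> 0" and z: "z \<noteq> 0"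
  shows "summable (\<lambda>k. norm (theta_term z p (int k)))"
    and "summable (\<lambda>k. norm (theta_term z p (- int k - 1)))"
proof -
  have pos: "summable (\<lambda>k. norm (theta_term w p (int k)))" for w
    unfolding theta_term_norm using p summable_quadratic_power[of "norm p" "norm w"] by simp
  show "summable (\<lambda>k. norm (theta_term z p (int k)))" by (rule pos)
  show "summable (\<lambda>k. norm (theta_term z p (- int k - 1)))"
    unfolding theta_term_reflect[OF p(2) z] norm_mult by (intro summable_mult pos)
qed

lemma theta_term_abs_summable:
  assumes "norm p < 1" "p \<noteq> 0" "z \<noteq> 0"
  shows "(\<lambda>l. norm (theta_term z p l)) summable_on UNIV"
  using has_sum_int_split[of "\<lambda>l. norm (theta_term z p l)"] theta_term_summable[OF assms]
  by (auto intro: has_sum_imp_summable)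

lemma qfact_LIMSEQ: "norm p < 1 \<Longrightarrow> qfact p \<longlonglongrightarrow> qpoch_inf p p"
  unfolding qfact_def using qpoch_inf_LIMSEQ[of p p] by simp

lemma qbinom_bounded:
  assumes p: "norm p < 1"
  obtains C where "\<And>N k. norm (qbinom p N k) \<le> C"
proof -
  have lim: "qfact p \<longlonglongrightarrow> qpoch_inf p p" using qfact_LIMSEQ[OF p] .
  have "Bseq (qfact p)" by (rule convergent_imp_Bseq[OF convergentI[OF lim]])
  then obtain U where U: "U > 0" "\<And>n. norm (qfact p n) \<le> U" by (auto elim!: BseqE)
  have "(\<lambda>n. inverse (qfact p n)) \<longlonglongrightarrow> inverse (qpoch_inf p p)"
    using lim qpoch_inf_self_nonzero[OF p] by (intro tendsto_inverse)
  hence "Bseq (\<lambda>n. inverse (qfact p n))" by (rule convergent_imp_Bseq[OF convergentI])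
  then obtain V where V: "V > 0" "\<And>n. norm (inverse (qfact p n)) \<le> V" by (auto elim!: BseqE)
  show ?thesis
  proof (rule that[of "U * V * V"])
    fix N k
    have "norm (qbinom p N k) \<le> norm (qfact p N) * norm (inverse (qfact p k)) * norm (inverse (qfact p (N - k)))"
      by (simp add: qbinom_def norm_mult norm_divide norm_inverse divide_inverse)
    also have "\<dots> \<le> U * V * V"
      using U V by (intro mult_mono) auto
    finally show "norm (qbinom p N k) \<le> U * V * V" .
  qed
qed

lemma qbinom_central_LIMSEQ:
  assumes p: "norm p < 1"
  shows "(\<lambda>n. qbinom p (2*n) (n + k)) \<longlonglongrightarrow> inverse (qpoch_inf p p)"
proof -
  define L where "L = qpoch_inf p p"
  have "L \<noteq> 0" unfolding L_def by (rule qpoch_inf_self_nonzero[OF p])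
  have "(\<lambda>n. qfact p (2*n) * inverse (qfact p (n + k)) * inverse (qfact p (n - k)))
      \<longlonglongrightarrow> L * inverse L * inverse L"
    unfolding L_def using qpoch_inf_self_nonzero[OF p]
    by (intro tendsto_mult tendsto_inverse filterlim_compose[OF qfact_LIMSEQ[OF p]]
        mult_nat_left_at_top filterlim_add_const_nat_at_top filterlim_minus_const_nat_at_top) auto
  moreover have "eventually (\<lambda>n. qfact p (2*n) * inverse (qfact p (n + k)) * inverse (qfact p (n - k))
      = qbinom p (2*n) (n + k)) sequentially"
    using eventually_ge_at_top[of k]
  proof eventually_elim
    case (elim n)
    hence "2*n - (n + k) = n - k" by simp
    thus ?case using elim by (simp add: qbinom_def divide_inverse mult.assoc)
  qed
  ultimately show ?thesis using \<open>L \<noteq> 0\<close> unfolding L_def by (simp add: Lim_transform_eventually)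
qed

lemma tannery_weighted:
  fixes f :: "nat \<Rightarrow> complex" and w :: "nat \<Rightarrow> nat \<Rightarrow> complex"
  assumes f: "summable (\<lambda>k. norm (f k))"
    and w: "\<And>k. (\<lambda>n. w k n) \<longlonglongrightarrow> L" and bound: "\<And>k n. norm (w k n) \<le> C"
  shows "(\<lambda>n. \<Sum>k. w k n * f k) \<longlonglongrightarrow> L * (\<Sum>k. f k)"
proof -
  have "(\<lambda>n. \<Sum>k. w k n * f k) \<longlonglongrightarrow> (\<Sum>k. L * f k)"
  proof (rule tannerys_theorem[where M="\<lambda>k. C * norm (f k)", THEN conjunct2, THEN conjunct2])
    show "(\<lambda>n. w k n * f k) \<longlonglongrightarrow> L * f k" for k
      by (intro tendsto_mult w tendsto_const)
    show "eventually (\<lambda>(k, n). norm (w k n * f k) \<le> C * norm (f k)) (at_top \<times>\<^sub>F sequentially)"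
      by (intro always_eventually) (auto simp: norm_mult intro: mult_right_mono bound)
    show "summable (\<lambda>k. C * norm (f k))" using f by (rule summable_mult)
  qed simp
  thus ?thesis using suminf_mult[OF summable_norm_cancel[OF f], of L] by simp
qed

theorem jacobi_triple_product:
  assumes p: "norm p < 1" "p \<noteq> 0" and w: "w \<noteq> 0"
  shows "(theta_term (- w) p has_sum qpoch_inf p p * qtheta w p) UNIV"
proof -
  define z where "z = - w"
  have z: "z \<noteq> 0" using w z_def by simp
  define L where "L = qpoch_inf p p"
  have "L \<noteq> 0" unfolding L_def by (rule qpoch_inf_self_nonzero[OF p(1)])
  define f where "f = (\<lambda>k. theta_term z p (int k))"
  define g where "g = (\<lambda>k. theta_term z p (- int k - 1))"
  note summable = theta_term_summable[OF p z]
  have total: "(theta_term z p has_sum (suminf f + suminf g)) UNIV"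
    unfolding f_def g_def by (rule has_sum_int_split[OF summable])
  obtain C where C: "\<And>N k. norm (qbinom p N k) \<le> C" using qbinom_bounded[OF p(1)] by blast
  have lim_f: "(\<lambda>n. \<Sum>k. qbinom p (2*n) (n + k) * f k) \<longlonglongrightarrow> inverse L * suminf f"
    unfolding L_def f_def by (rule tannery_weighted[OF summable(1) qbinom_central_LIMSEQ[OF p(1)] C])
  have lim_g: "(\<lambda>n. \<Sum>k. qbinom p (2*n) (n + Suc k) * g k) \<longlonglongrightarrow> inverse L * suminf g"
    unfolding L_def g_def by (rule tannery_weighted[OF summable(2) qbinom_central_LIMSEQ[OF p(1)] C])
  have partial: "(\<Prod>j<n. (1 + z * p ^ j) * (1 + p ^ Suc j / z))
      = (\<Sum>k. qbinom p (2*n) (n + k) * f k) + (\<Sum>k. qbinom p (2*n) (n + Suc k) * g k)" for n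
  proof -
    have "(\<Sum>k. qbinom p (2*n) (n + k) * f k) = (\<Sum>k\<le>n. qbinom p (2*n) (n + k) * f k)"
      by (rule suminf_finite) (auto simp: qbinom_def)
    moreover have "(\<Sum>k. qbinom p (2*n) (n + Suc k) * g k) = (\<Sum>k<n. qbinom p (2*n) (n + Suc k) * g k)"
      by (rule suminf_finite) (auto simp: qbinom_def)
    ultimately show ?thesis
      unfolding finite_jacobi_triple_product[OF p z] sum_int_sym_split f_def g_def
      by (simp add: nat_add_distrib)
  qed
  have "(\<lambda>n. \<Prod>j<n. (1 + z * p ^ j) * (1 + p ^ Suc j / z)) \<longlonglongrightarrow> qtheta w p"
  proof -
    have "(\<lambda>n. (\<Prod>j<n. 1 - w * p ^ j) * (\<Prod>j<n. 1 - p / w * p ^ j)) \<longlonglongrightarrow> qtheta w p"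
      unfolding qtheta_def by (intro tendsto_mult qpoch_inf_LIMSEQ p)
    thus ?thesis by (simp add: z_def prod.distrib)
  qed
  moreover have "(\<lambda>n. \<Prod>j<n. (1 + z * p ^ j) * (1 + p ^ Suc j / z)) \<longlonglongrightarrow> inverse L * suminf f + inverse L * suminf g"
    unfolding partial by (rule tendsto_add[OF lim_f lim_g])
  ultimately have "inverse L * suminf f + inverse L * suminf g = qtheta w p"
    using LIMSEQ_unique by blast
  hence "suminf f + suminf g = L * qtheta w p"
    using \<open>L \<noteq> 0\<close> by (simp add: field_simps)
  thus ?thesis using total unfolding z_def L_def by simp
qed

(* Signed monomials (-1)^s q^e: every term below is of this shape, and two of them agree as
   soon as the signs have the same parity and the exponents agree. *)
definition smon :: "complex \<Rightarrow> int \<Rightarrow> int \<Rightarrow> complex" where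
  "smon q s e = (-1) powi s * q powi e"

lemma smon_mult: "q \<noteq> 0 \<Longrightarrow> smon q a b * smon q c d = smon q (a + c) (b + d)"
  unfolding smon_def by (simp add: power_int_add mult_ac)

lemma smon_cong: "even (s1 - s2) \<Longrightarrow> e1 = e2 \<Longrightarrow> smon q s1 e1 = smon q s2 e2"
  unfolding smon_def power_int_minus_left by auto

lemma smon_power_base: "smon (q ^ k) s e = smon q s (int k * e)"
  unfolding smon_def by (simp add: power_int_power)

lemma theta_term_smon:
  assumes "q \<noteq> 0"
  shows "theta_term (- (q powi e)) (q ^ k) m = smon q m (e * m + int k * binom2 m)"
proof -
  have "(- (q powi e)) powi m = (-1) powi m * q powi (e * m)"
    using power_int_mult_distrib[of "-1" "q powi e" m] by (simp add: power_int_mult)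
  thus ?thesis unfolding theta_term_def smon_def
    using assms by (simp add: power_int_power power_int_add mult_ac)
qed

(* The cubic theta sum E_c(r) = sum_k (-1)^k r^(3 (k choose 2) + c k).  By the triple product in
   base r^3 it vanishes for 3 | c and is otherwise a signed monomial times (r;r)_inf. *)
definition cubic_term :: "complex \<Rightarrow> int \<Rightarrow> int \<Rightarrow> complex" where
  "cubic_term r c k = (-1) powi k * r powi (3 * binom2 k + c * k)"

definition cubic_coeff :: "complex \<Rightarrow> int \<Rightarrow> complex" where
  "cubic_coeff r c = (if c mod 3 = 0 then 0
     else smon r (c div 3) (- ((c mod 3) * (c div 3) + 3 * binom2 (c div 3))))"

lemma cubic_term_smon: "cubic_term (q ^ k) c l = smon q l (int k * (3 * binom2 l + c * l))"
  unfolding cubic_term_def smon_def by (simp add: power_int_power)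

lemma cubic_coeff_eq:
  "c = 3 * t + \<rho> \<Longrightarrow> \<rho> \<in> {1, 2} \<Longrightarrow> cubic_coeff r c = smon r t (- (\<rho> * t + 3 * binom2 t))"
  unfolding cubic_coeff_def by auto

lemma cubic_coeff_zero: "c = 3 * t \<Longrightarrow> cubic_coeff r c = 0"
  unfolding cubic_coeff_def by simp

(* E_0 = 0 and E_1 = E_2 = (r;r)_inf, since (1;r^3)_inf = 0 and
   (r^3;r^3)_inf (r;r^3)_inf (r^2;r^3)_inf = (r;r)_inf. *)
lemma cubic_sum_residue:
  assumes r: "norm r < 1" "r \<noteq> 0" and \<rho>: "\<rho> \<in> {0, 1, 2}"
  shows "(cubic_term r \<rho> has_sum (if \<rho> = 0 then 0 else qpoch_inf r r)) UNIV"
proof -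
  have r3: "norm (r^3) < 1" "r^3 \<noteq> 0" using r by (simp_all add: norm_power power_less_one_iff)
  have "cubic_term r \<rho> = theta_term (- (r powi \<rho>)) (r^3)"
    using r(2) by (intro ext) (simp add: cubic_term_def theta_term_smon smon_def power_int_power add.commute)
  hence jtp: "(cubic_term r \<rho> has_sum qpoch_inf (r^3) (r^3) * qtheta (r powi \<rho>) (r^3)) UNIV"
    using jacobi_triple_product[OF r3, of "r powi \<rho>"] r(2) by simp
  consider "\<rho> = 0" | "\<rho> = 1" | "\<rho> = 2" using \<rho> by auto
  thus ?thesis
  proof cases
    case 1 thus ?thesis using jtp qpoch_inf_one[OF r3(1)] by (simp add: qtheta_def)
  next
    case 2
    have "r^3 / r = r^2" using r by (simp add: power3_eq_cube power2_eq_square)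
    thus ?thesis using jtp 2 qpoch_inf_mod3_split[OF r(1)] by (simp add: qtheta_def mult_ac)
  next
    case 3
    have "r^3 / r^2 = r" using r by (simp add: power3_eq_cube power2_eq_square)
    thus ?thesis using jtp 3 qpoch_inf_mod3_split[OF r(1)] by (simp add: qtheta_def mult_ac)
  qed
qed

(* Shifting the summation index by t = c div 3 reduces E_c to the residue c mod 3. *)
lemma cubic_term_shift:
  assumes "r \<noteq> 0"
  shows "cubic_term r (3 * t + \<rho>) (m - t) = smon r t (- (\<rho> * t + 3 * binom2 t)) * cubic_term r \<rho> m"
proof -
  have "3 * binom2 (m - t) + (3 * t + \<rho>) * (m - t) = - (\<rho> * t + 3 * binom2 t) + (3 * binom2 m + \<rho> * m)"
    using binom2_double[of "m - t"] binom2_double[of t] binom2_double[of m] by algebra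
  hence "cubic_term r (3 * t + \<rho>) (m - t) = smon r (m - t) (- (\<rho> * t + 3 * binom2 t) + (3 * binom2 m + \<rho> * m))"
    unfolding cubic_term_def smon_def by simp
  also have "\<dots> = smon r t (- (\<rho> * t + 3 * binom2 t)) * smon r m (3 * binom2 m + \<rho> * m)"
    unfolding smon_mult[OF assms] by (rule smon_cong) auto
  finally show ?thesis by (simp add: cubic_term_def smon_def)
qed

theorem cubic_sum:
  assumes r: "norm r < 1" "r \<noteq> 0"
  shows "(cubic_term r c has_sum cubic_coeff r c * qpoch_inf r r) UNIV"
proof -
  define t where "t = c div 3"
  define \<rho> where "\<rho> = c mod 3"
  have c: "c = 3 * t + \<rho>" and \<rho>: "\<rho> \<in> {0, 1, 2}" unfolding t_def \<rho>_def by auto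
  define K where "K = smon r t (- (\<rho> * t + 3 * binom2 t))"
  have "((\<lambda>m. K * cubic_term r \<rho> m) has_sum K * (if \<rho> = 0 then 0 else qpoch_inf r r)) UNIV"
    by (rule has_sum_cmult_right[OF cubic_sum_residue[OF r \<rho>]])
  also have "?this \<longleftrightarrow> (cubic_term r c has_sum K * (if \<rho> = 0 then 0 else qpoch_inf r r)) UNIV"
    by (rule has_sum_reindex_bij_witness[where i="\<lambda>k. k + t" and j="\<lambda>m. m - t"])
       (auto simp: c K_def cubic_term_shift[OF r(2)])
  finally show ?thesis unfolding K_def t_def \<rho>_def cubic_coeff_def by (cases "c mod 3 = 0") simp_all
qed

lemma abs_summable_on_product:
  fixes u :: "'a \<Rightarrow> complex" and v :: "'b \<Rightarrow> complex"
  assumes u: "(\<lambda>x. norm (u x)) summable_on A" and v: "(\<lambda>x. norm (v x)) summable_on B"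
  shows "(\<lambda>z. norm ((\<lambda>(x, y). u x * v y) z)) summable_on (A \<times> B)"
proof -
  have "(\<lambda>x. norm (u x) * infsum (\<lambda>y. norm (v y)) B) summable_on A"
    using u by (rule summable_on_cmult_left)
  moreover have "infsum (\<lambda>y. norm (u x * v y)) B = norm (u x) * infsum (\<lambda>y. norm (v y)) B" for x
    by (simp add: norm_mult infsum_cmult_right')
  ultimately have "(\<lambda>x. norm (infsum (\<lambda>y. norm (u x * v y)) B)) summable_on A"
    by (simp add: infsum_nonneg)
  moreover have "\<forall>x\<in>A. (\<lambda>y. norm (u x * v y)) summable_on B"
    using v by (auto simp: norm_mult intro: summable_on_cmult_right)
  ultimately show ?thesis
    using Infinite_Sum.abs_summable_on_Sigma_iff[where f="\<lambda>(x, y). u x * v y" and A=A and B="\<lambda>_. B"] by simp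
qed

lemma has_sum_product:
  fixes u :: "'a \<Rightarrow> complex" and v :: "'b \<Rightarrow> complex"
  assumes u: "(u has_sum U) A" "(\<lambda>x. norm (u x)) summable_on A"
    and v: "(v has_sum V) B" "(\<lambda>x. norm (v x)) summable_on B"
  shows "((\<lambda>(x, y). u x * v y) has_sum U * V) (A \<times> B)"
proof (rule has_sum_SigmaI[where g="\<lambda>x. u x * V"])
  show "((\<lambda>y. (\<lambda>(x, y). u x * v y) (x, y)) has_sum u x * V) B" for x
    using has_sum_cmult_right[OF v(1), of "u x"] by simp
  show "((\<lambda>x. u x * V) has_sum U * V) A" by (rule has_sum_cmult_left[OF u(1)])
  show "(\<lambda>(x, y). u x * v y) summable_on A \<times> B"
    by (rule abs_summable_summable[OF abs_summable_on_product[OF u(2) v(2)]])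
qed

lemma has_sum_rows:
  fixes f :: "'a \<times> 'b \<Rightarrow> complex"
  assumes f: "(f has_sum S) (A \<times> B)" and abs: "(\<lambda>x. norm (f x)) summable_on (A \<times> B)"
    and rows: "\<And>a. a \<in> A \<Longrightarrow> ((\<lambda>b. f (a, b)) has_sum g a) B"
  shows "(g has_sum S) A" and "(\<lambda>x. norm (g x)) summable_on A"
proof -
  show "(g has_sum S) A" using has_sum_SigmaD[where A=A and B="\<lambda>_. B", OF _ rows] f by simp
  have row_abs: "\<forall>a\<in>A. (\<lambda>b. norm (f (a, b))) summable_on B"
    and "(\<lambda>a. norm (infsum (\<lambda>b. norm (f (a, b))) B)) summable_on A"
    using abs Infinite_Sum.abs_summable_on_Sigma_iff[where f=f and A=A and B="\<lambda>_. B"] by simp_all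
  hence "(\<lambda>a. infsum (\<lambda>b. norm (f (a, b))) B) summable_on A" by (simp add: infsum_nonneg)
  thus "(\<lambda>x. norm (g x)) summable_on A"
  proof (rule Infinite_Sum.abs_summable_on_comparison_test')
    fix a assume "a \<in> A"
    show "norm (g a) \<le> infsum (\<lambda>b. norm (f (a, b))) B"
      using norm_infsum_le[OF rows[OF \<open>a \<in> A\<close>] has_sum_infsum] row_abs \<open>a \<in> A\<close> by simp
  qed
qed

(* Its sum is the product of two theta
   functions with bases q^20 and q^40: multiplying the two triple products, re-indexing
   (m, k) -> (m - 2k, k) and summing over k (a cubic sum in q^40) leaves exactly it. *)
definition theta_coeff :: "complex \<Rightarrow> int \<Rightarrow> int \<Rightarrow> complex" where
  "theta_coeff q e N = smon q N (e * N + 20 * binom2 N) * cubic_coeff (q^40) (N + 1)"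

lemma theta_product_reindexed:
  assumes "q \<noteq> 0"
  shows "theta_term (- (q powi e)) (q^20) (N + 2*k) * theta_term (- (q powi (20 - 2*e))) (q^40) k
       = smon q N (e * N + 20 * binom2 N) * cubic_term (q^40) (N + 1) k"
proof -
  have "theta_term (- (q powi e)) (q^20) (N + 2*k) * theta_term (- (q powi (20 - 2*e))) (q^40) k
      = smon q (N + 2*k + k) (e * (N + 2*k) + 20 * binom2 (N + 2*k) + ((20 - 2*e) * k + 40 * binom2 k))"
    using assms by (simp add: theta_term_smon smon_mult)
  also have "\<dots> = smon q (N + k) (e * N + 20 * binom2 N + 40 * (3 * binom2 k + (N + 1) * k))"
  proof (rule smon_cong)
    show "even (N + 2 * k + k - (N + k))" by simp
    show "e * (N + 2*k) + 20 * binom2 (N + 2*k) + ((20 - 2*e) * k + 40 * binom2 k)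
        = e * N + 20 * binom2 N + 40 * (3 * binom2 k + (N + 1) * k)"
      using binom2_double[of "N + 2*k"] binom2_double[of N] binom2_double[of k] by algebra
  qed
  also have "\<dots> = smon q N (e * N + 20 * binom2 N) * cubic_term (q^40) (N + 1) k"
    using assms by (simp add: cubic_term_smon smon_mult)
  finally show ?thesis .
qed

theorem theta_coeff_has_sum:
  assumes q: "q \<noteq> 0" "norm q < 1"
  shows "(theta_coeff q e has_sum
            qpoch_inf (q^20) (q^20) * qtheta (q powi e) (q^20) * qtheta (q powi (20 - 2*e)) (q^40)) UNIV"
    and "(\<lambda>x. norm (theta_coeff q e x)) summable_on UNIV"
proof -
  have p20: "norm (q^20) < 1" "q^20 \<noteq> 0" and p40: "norm (q^40) < 1" "q^40 \<noteq> 0"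
    using q by (simp_all add: norm_power power_less_one_iff)
  define u where "u = theta_term (- (q powi e)) (q^20)"
  define v where "v = theta_term (- (q powi (20 - 2*e))) (q^40)"
  define Q where "Q = qpoch_inf (q^40) (q^40)"
  define T where "T = qpoch_inf (q^20) (q^20) * qtheta (q powi e) (q^20) * qtheta (q powi (20 - 2*e)) (q^40)"
  have "Q \<noteq> 0" unfolding Q_def by (rule qpoch_inf_self_nonzero[OF p40(1)])
  have abs_u: "(\<lambda>x. norm (u x)) summable_on UNIV" and abs_v: "(\<lambda>x. norm (v x)) summable_on UNIV"
    unfolding u_def v_def using q by (simp_all add: theta_term_abs_summable p20 p40)
  have sum_u: "(u has_sum qpoch_inf (q^20) (q^20) * qtheta (q powi e) (q^20)) UNIV"
    unfolding u_def by (rule jacobi_triple_product[OF p20]) (use q in simp)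
  have sum_v: "(v has_sum Q * qtheta (q powi (20 - 2*e)) (q^40)) UNIV"
    unfolding v_def Q_def by (rule jacobi_triple_product[OF p40]) (use q in simp)
  define F where "F = (\<lambda>(m, k). u m * v k)"
  have F: "(F has_sum Q * T) UNIV" "(\<lambda>x. norm (F x)) summable_on UNIV"
    using has_sum_product[OF sum_u abs_u sum_v abs_v] abs_summable_on_product[OF abs_u abs_v]
    unfolding F_def T_def by (simp_all add: mult_ac)
  define G where "G = (\<lambda>(N, k). smon q N (e * N + 20 * binom2 N) * cubic_term (q^40) (N + 1) k)"
  have shear: "F (N + 2*k, k) = G (N, k)" for N k
    unfolding F_def G_def u_def v_def by (simp add: theta_product_reindexed[OF q(1)])
  have "(G has_sum Q * T) UNIV \<longleftrightarrow> (F has_sum Q * T) UNIV"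
    by (rule has_sum_reindex_bij_witness[where i="\<lambda>(m, k). (m - 2*k, k)" and j="\<lambda>(N, k). (N + 2*k, k)"])
       (auto simp: shear)
  moreover have "(\<lambda>x. norm (G x)) summable_on UNIV \<longleftrightarrow> (\<lambda>x. norm (F x)) summable_on UNIV"
    by (rule summable_on_reindex_bij_witness[where i="\<lambda>(m, k). (m - 2*k, k)" and j="\<lambda>(N, k). (N + 2*k, k)"])
       (auto simp: shear)
  ultimately have G: "(G has_sum Q * T) UNIV" "(\<lambda>x. norm (G x)) summable_on UNIV"
    using F by simp_all
  have rows: "((\<lambda>k. G (N, k)) has_sum Q * theta_coeff q e N) UNIV" for N
    using has_sum_cmult_right[OF cubic_sum[OF p40, of "N + 1"], of "smon q N (e * N + 20 * binom2 N)"]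
    unfolding G_def Q_def theta_coeff_def by (simp add: mult_ac)
  have "((\<lambda>N. Q * theta_coeff q e N) has_sum Q * T) UNIV"
    and abs: "(\<lambda>N. norm (Q * theta_coeff q e N)) summable_on UNIV"
    using has_sum_rows[where f=G and A=UNIV and B=UNIV] G rows by simp_all
  thus "(theta_coeff q e has_sum T) UNIV" using \<open>Q \<noteq> 0\<close> by (simp add: has_sum_cmult_right_iff)
  show "(\<lambda>x. norm (theta_coeff q e x)) summable_on UNIV"
    using summable_on_cmult_right[OF abs, of "inverse (norm Q)"] \<open>Q \<noteq> 0\<close>
    by (simp add: norm_mult mult.assoc[symmetric])
qed

(* The left-hand side and its absolute convergence: the exponent dominates |i| + |j| + |k|. *)
definition lhs_term :: "complex \<Rightarrow> int \<times> int \<times> int \<Rightarrow> complex" where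
  "lhs_term q = (\<lambda>(i, j, k). (-1) powi (i + j + k) * q powi (binom2 (i + j + k) + i^2 + j^2 + k^2))"

lemma abs_le_square: "\<bar>i\<bar> \<le> (i::int)^2"
proof (cases "i = 0")
  case False
  hence "\<bar>i\<bar> * 1 \<le> \<bar>i\<bar> * \<bar>i\<bar>" by (intro mult_left_mono) auto
  thus ?thesis by (simp add: power2_eq_square abs_mult_self_eq)
qed simp

lemma geometric_int_abs_summable:
  assumes "norm (q::complex) < 1"
  shows "(\<lambda>i::int. norm (complex_of_real (norm q ^ nat \<bar>i\<bar>))) summable_on UNIV"
proof -
  have "nat \<bar>- int k - 1\<bar> = Suc k" for k by simp
  hence neg: "summable (\<lambda>k. norm (norm (complex_of_real (norm q ^ nat \<bar>- int k - 1\<bar>))))"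
    using assms by (simp add: summable_geometric summable_mult norm_power norm_mult)
  have pos: "summable (\<lambda>k. norm (norm (complex_of_real (norm q ^ nat \<bar>int k\<bar>))))"
    using assms by (simp add: summable_geometric norm_power)
  show ?thesis using has_sum_int_split[OF pos neg] by (rule has_sum_imp_summable)
qed

lemma lhs_term_abs_summable:
  assumes q: "norm q < 1"
  shows "(\<lambda>x. norm (lhs_term q x)) summable_on UNIV"
proof -
  define g where "g = (\<lambda>i::int. complex_of_real (norm q ^ nat \<bar>i\<bar>))"
  have g: "(\<lambda>i. norm (g i)) summable_on UNIV"
    unfolding g_def by (rule geometric_int_abs_summable[OF q])
  have g3: "(\<lambda>z. norm ((\<lambda>(i, y). g i * (\<lambda>(j, k). g j * g k) y) z)) summable_on (UNIV \<times> (UNIV \<times> UNIV))"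
    by (rule abs_summable_on_product[OF g abs_summable_on_product[OF g g]])
  show ?thesis
  proof (rule Infinite_Sum.abs_summable_on_comparison_test)
    show "(\<lambda>z. norm ((\<lambda>(i, y). g i * (\<lambda>(j, k). g j * g k) y) z)) summable_on UNIV"
      using g3 by simp
    fix x :: "int \<times> int \<times> int"
    obtain i j k where x: "x = (i, j, k)" by (cases x) auto
    define E where "E = binom2 (i + j + k) + i^2 + j^2 + k^2"
    have "int (nat \<bar>i\<bar> + nat \<bar>j\<bar> + nat \<bar>k\<bar>) \<le> E" unfolding E_def
      using binom2_nonneg[of "i + j + k"] abs_le_square[of i] abs_le_square[of j] abs_le_square[of k]
      by linarith
    have "norm (lhs_term q x) = norm q powi E"
      unfolding x lhs_term_def E_def by (simp add: norm_mult norm_power_int)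
    also have "\<dots> \<le> norm q powi int (nat \<bar>i\<bar> + nat \<bar>j\<bar> + nat \<bar>k\<bar>)"
      using q \<open>int (nat \<bar>i\<bar> + nat \<bar>j\<bar> + nat \<bar>k\<bar>) \<le> E\<close> by (intro power_int_decreasing) auto
    also have "\<dots> = norm q ^ nat \<bar>i\<bar> * (norm q ^ nat \<bar>j\<bar> * norm q ^ nat \<bar>k\<bar>)"
      by (simp only: power_int_of_nat power_add mult.assoc)
    also have "\<dots> = norm ((\<lambda>(i, y). g i * (\<lambda>(j, k). g j * g k) y) x)"
      unfolding x g_def by (simp add: norm_mult norm_power)
    finally show "norm (lhs_term q x) \<le> norm ((\<lambda>(i, y). g i * (\<lambda>(j, k). g j * g k) y) x)" .
  qed
qed

lemma lhs_term_split:
  assumes "q \<noteq> 0"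
  shows "lhs_term q (i, j, k) = smon q (i + j) (binom2 (i + j) + i^2 + j^2) * cubic_term q (i + j + 1) k"
proof -
  have "smon q (i + j) (binom2 (i + j) + i^2 + j^2) * cubic_term q (i + j + 1) k
      = smon q (i + j + k) (binom2 (i + j) + i^2 + j^2 + (3 * binom2 k + (i + j + 1) * k))"
    unfolding cubic_term_def smon_def[of q k, symmetric] smon_mult[OF assms] ..
  also have "\<dots> = smon q (i + j + k) (binom2 (i + j + k) + i^2 + j^2 + k^2)"
  proof (rule smon_cong)
    show "binom2 (i + j) + i^2 + j^2 + (3 * binom2 k + (i + j + 1) * k) = binom2 (i + j + k) + i^2 + j^2 + k^2"
      using binom2_double[of "i + j"] binom2_double[of "i + j + k"] binom2_double[of k] by algebra
  qed simp
  finally show ?thesis unfolding lhs_term_def smon_def by simp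
qed

definition reduced_term :: "complex \<Rightarrow> int \<Rightarrow> int \<Rightarrow> complex" where
  "reduced_term q i j = smon q (i + j) (binom2 (i + j) + i^2 + j^2) * cubic_coeff q (i + j + 1)"

theorem reduced_term_has_sum:
  assumes q: "0 < norm q" "norm q < 1"
  shows "((\<lambda>(i, j). reduced_term q i j) has_sum infsum (lhs_term q) UNIV / qpoch q) UNIV"
proof -
  have "q \<noteq> 0" using q by auto
  define S where "S = infsum (lhs_term q) UNIV"
  have "(lhs_term q has_sum S) UNIV"
    unfolding S_def by (rule has_sum_infsum[OF abs_summable_summable[OF lhs_term_abs_summable[OF q(2)]]])
  moreover have "(lhs_term q has_sum S) UNIV \<longleftrightarrow> ((\<lambda>((i, j), k). lhs_term q (i, j, k)) has_sum S) UNIV"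
    by (rule has_sum_reindex_bij_witness[where i="\<lambda>((i, j), k). (i, j, k)" and j="\<lambda>(i, j, k). ((i, j), k)"]) auto
  ultimately have triple: "((\<lambda>((i, j), k). lhs_term q (i, j, k)) has_sum S) (UNIV \<times> UNIV)" by simp
  have rows: "((\<lambda>k. (\<lambda>((i, j), k). lhs_term q (i, j, k)) (x, k)) has_sum qpoch q * (\<lambda>(i, j). reduced_term q i j) x) UNIV" for x
    using has_sum_cmult_right[OF cubic_sum[OF q(2) \<open>q \<noteq> 0\<close>, of "fst x + snd x + 1"],
        of "smon q (fst x + snd x) (binom2 (fst x + snd x) + (fst x)^2 + (snd x)^2)"]
    by (cases x) (simp add: lhs_term_split[OF \<open>q \<noteq> 0\<close>] reduced_term_def qpoch_def mult_ac)
  have "((\<lambda>x. qpoch q * (\<lambda>(i, j). reduced_term q i j) x) has_sum S) UNIV"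
    using has_sum_SigmaD[where A=UNIV and B="\<lambda>_. UNIV", OF _ rows] triple by simp
  thus ?thesis using qpoch_nonzero[OF q(2)] unfolding S_def
    by (simp add: has_sum_cmult_right_iff field_simps)
qed

lemma reduced_term_eq:
  assumes "q \<noteq> 0" and "i + j + 1 = 3 * t + \<rho>" and "\<rho> \<in> {1, 2}"
  shows "reduced_term q i j = smon q (i + j + t) (binom2 (i + j) + i^2 + j^2 - (\<rho> * t + 3 * binom2 t))"
  unfolding reduced_term_def cubic_coeff_eq[OF assms(2,3)] smon_mult[OF assms(1)]
  by (simp add: algebra_simps)

lemma theta_coeff_eq:
  assumes "q \<noteq> 0" and "N + 1 = 3 * t + \<rho>" and "\<rho> \<in> {1, 2}"
  shows "theta_coeff q e N = smon q (N + t) (e * N + 20 * binom2 N - 40 * (\<rho> * t + 3 * binom2 t))"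
  unfolding theta_coeff_def cubic_coeff_eq[OF assms(2,3)] smon_power_base smon_mult[OF assms(1)]
  by (simp add: algebra_simps)

lemma reduced_term_even_class:
  assumes q: "q \<noteq> 0"
  shows "reduced_term q (- N - m) (m - N) = theta_term (q^2) (q^4) m * theta_coeff q 4 N"
proof -
  define n where "n = N div 3"
  have theta: "theta_term (q^2) (q^4) m = smon q 0 (2 * m + 4 * binom2 m)"
    unfolding theta_term_def smon_def using q by (simp add: power_int_power power_int_add)
  have "N = 3 * n \<or> N = 3 * n + 1 \<or> N = 3 * n + 2" unfolding n_def by presburger
  thus ?thesis
  proof (elim disjE)
    assume N: "N = 3 * n"
    have L: "reduced_term q (- N - m) (m - N) = smon q ((- N - m) + (m - N) + (-2 * n))
        (binom2 ((- N - m) + (m - N)) + (- N - m)^2 + (m - N)^2 - (1 * (-2 * n) + 3 * binom2 (-2 * n)))"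
      by (rule reduced_term_eq[OF q]) (use N in auto)
    have R: "theta_coeff q 4 N = smon q (N + n) (4 * N + 20 * binom2 N - 40 * (1 * n + 3 * binom2 n))"
      by (rule theta_coeff_eq[OF q]) (use N in auto)
    show ?thesis unfolding L R theta smon_mult[OF q]
      by (rule smon_cong, use N in presburger,
          use binom2_double[of "(- N - m) + (m - N)"] binom2_double[of "-2 * n"] binom2_double[of m]
            binom2_double[of N] binom2_double[of n] N in algebra)
  next
    assume N: "N = 3 * n + 1"
    have L: "reduced_term q (- N - m) (m - N) = smon q ((- N - m) + (m - N) + (-2 * n - 1))
        (binom2 ((- N - m) + (m - N)) + (- N - m)^2 + (m - N)^2 - (2 * (-2 * n - 1) + 3 * binom2 (-2 * n - 1)))"
      by (rule reduced_term_eq[OF q]) (use N in auto)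
    have R: "theta_coeff q 4 N = smon q (N + n) (4 * N + 20 * binom2 N - 40 * (2 * n + 3 * binom2 n))"
      by (rule theta_coeff_eq[OF q]) (use N in auto)
    show ?thesis unfolding L R theta smon_mult[OF q]
      by (rule smon_cong, use N in presburger,
          use binom2_double[of "(- N - m) + (m - N)"] binom2_double[of "-2 * n - 1"] binom2_double[of m]
            binom2_double[of N] binom2_double[of n] N in algebra)
  next
    assume N: "N = 3 * n + 2"
    have "reduced_term q (- N - m) (m - N) = 0"
      unfolding reduced_term_def by (subst cubic_coeff_zero[where t="-2 * n - 1"]) (use N in auto)
    moreover have "theta_coeff q 4 N = 0"
      unfolding theta_coeff_def by (subst cubic_coeff_zero[where t="n + 1"]) (use N in auto)
    ultimately show ?thesis by simp
  qed
qed

lemma reduced_term_odd_class: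
  assumes q: "q \<noteq> 0"
  shows "reduced_term q (N + 1 - m) (N + m) = - q * (theta_term 1 (q^4) m * theta_coeff q 6 N)"
proof -
  define n where "n = N div 3"
  have theta: "- q * theta_term 1 (q^4) m = smon q 1 (1 + 4 * binom2 m)"
    unfolding theta_term_def smon_def using q by (simp add: power_int_power power_int_add)
  have "N = 3 * n \<or> N = 3 * n + 1 \<or> N = 3 * n + 2" unfolding n_def by presburger
  thus ?thesis
  proof (elim disjE)
    assume N: "N = 3 * n"
    have L: "reduced_term q (N + 1 - m) (N + m) = smon q ((N + 1 - m) + (N + m) + 2 * n)
        (binom2 ((N + 1 - m) + (N + m)) + (N + 1 - m)^2 + (N + m)^2 - (2 * (2 * n) + 3 * binom2 (2 * n)))"
      by (rule reduced_term_eq[OF q]) (use N in auto)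
    have R: "theta_coeff q 6 N = smon q (N + n) (6 * N + 20 * binom2 N - 40 * (1 * n + 3 * binom2 n))"
      by (rule theta_coeff_eq[OF q]) (use N in auto)
    show ?thesis unfolding L R mult.assoc[symmetric] theta smon_mult[OF q]
      by (rule smon_cong, use N in presburger,
          use binom2_double[of "(N + 1 - m) + (N + m)"] binom2_double[of "2 * n"] binom2_double[of m]
            binom2_double[of N] binom2_double[of n] N in algebra)
  next
    assume N: "N = 3 * n + 1"
    have L: "reduced_term q (N + 1 - m) (N + m) = smon q ((N + 1 - m) + (N + m) + (2 * n + 1))
        (binom2 ((N + 1 - m) + (N + m)) + (N + 1 - m)^2 + (N + m)^2 - (1 * (2 * n + 1) + 3 * binom2 (2 * n + 1)))"
      by (rule reduced_term_eq[OF q]) (use N in auto)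
    have R: "theta_coeff q 6 N = smon q (N + n) (6 * N + 20 * binom2 N - 40 * (2 * n + 3 * binom2 n))"
      by (rule theta_coeff_eq[OF q]) (use N in auto)
    show ?thesis unfolding L R mult.assoc[symmetric] theta smon_mult[OF q]
      by (rule smon_cong, use N in presburger,
          use binom2_double[of "(N + 1 - m) + (N + m)"] binom2_double[of "2 * n + 1"] binom2_double[of m]
            binom2_double[of N] binom2_double[of n] N in algebra)
  next
    assume N: "N = 3 * n + 2"
    have "reduced_term q (N + 1 - m) (N + m) = 0"
      unfolding reduced_term_def by (subst cubic_coeff_zero[where t="2 * n + 2"]) (use N in auto)
    moreover have "theta_coeff q 6 N = 0"
      unfolding theta_coeff_def by (subst cubic_coeff_zero[where t="n + 1"]) (use N in auto)
    ultimately show ?thesis by simp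
  qed
qed

theorem reduced_sum_dissection:
  assumes q: "0 < norm q" "norm q < 1"
  shows "((\<lambda>(i, j). reduced_term q i j) has_sum
      qpoch_inf (q^4) (q^4) * qtheta (- (q^2)) (q^4) * (qpoch_inf (q^20) (q^20) * qtheta (q^4) (q^20) * qtheta (q^12) (q^40))
      + - q * (qpoch_inf (q^4) (q^4) * qtheta (- 1) (q^4) * (qpoch_inf (q^20) (q^20) * qtheta (q^6) (q^20) * qtheta (q^8) (q^40))))
      UNIV"
proof -
  have "q \<noteq> 0" using q by auto
  have p4: "norm (q^4) < 1" "q^4 \<noteq> 0" using q by (simp_all add: norm_power power_less_one_iff)
  define W0 where "W0 = qpoch_inf (q^4) (q^4) * qtheta (- (q^2)) (q^4)"
  define W1 where "W1 = qpoch_inf (q^4) (q^4) * qtheta (- 1) (q^4)"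
  define Y0 where "Y0 = qpoch_inf (q^20) (q^20) * qtheta (q^4) (q^20) * qtheta (q^12) (q^40)"
  define Y1 where "Y1 = qpoch_inf (q^20) (q^20) * qtheta (q^6) (q^20) * qtheta (q^8) (q^40)"
  have theta0: "(theta_term (q^2) (q^4) has_sum W0) UNIV"
    using jacobi_triple_product[OF p4, of "- (q^2)"] \<open>q \<noteq> 0\<close> unfolding W0_def by simp
  have theta1: "(theta_term 1 (q^4) has_sum W1) UNIV"
    using jacobi_triple_product[OF p4, of "- 1"] unfolding W1_def by simp
  have coeff0: "(theta_coeff q 4 has_sum Y0) UNIV" "(\<lambda>N. norm (theta_coeff q 4 N)) summable_on UNIV"
    using theta_coeff_has_sum[OF \<open>q \<noteq> 0\<close> q(2), of 4] unfolding Y0_def by simp_all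
  have coeff1: "(theta_coeff q 6 has_sum Y1) UNIV" "(\<lambda>N. norm (theta_coeff q 6 N)) summable_on UNIV"
    using theta_coeff_has_sum[OF \<open>q \<noteq> 0\<close> q(2), of 6] unfolding Y1_def by simp_all
  have prod0: "((\<lambda>(m, N). theta_term (q^2) (q^4) m * theta_coeff q 4 N) has_sum W0 * Y0) (UNIV \<times> UNIV)"
    by (rule has_sum_product[OF theta0 _ coeff0]) (use p4 \<open>q \<noteq> 0\<close> in \<open>simp add: theta_term_abs_summable\<close>)
  have prod1: "((\<lambda>x. - q * (\<lambda>(m, N). theta_term 1 (q^4) m * theta_coeff q 6 N) x) has_sum - q * (W1 * Y1))
      (UNIV \<times> UNIV)"
    by (rule has_sum_cmult_right[OF has_sum_product[OF theta1 _ coeff1]])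
       (use p4 in \<open>simp add: theta_term_abs_summable\<close>)
  define D0 where "D0 = {x :: int \<times> int. even (fst x + snd x)}"
  define D1 where "D1 = {x :: int \<times> int. odd (fst x + snd x)}"
  have "((\<lambda>(m, N). theta_term (q^2) (q^4) m * theta_coeff q 4 N) has_sum W0 * Y0) (UNIV \<times> UNIV)
      \<longleftrightarrow> ((\<lambda>(i, j). reduced_term q i j) has_sum W0 * Y0) D0"
    by (rule has_sum_reindex_bij_witness[where j="\<lambda>(m, N). (- N - m, m - N)"
          and i="\<lambda>(i, j). ((j - i) div 2, - (i + j) div 2)"])
       (auto simp: D0_def reduced_term_even_class[OF \<open>q \<noteq> 0\<close>], presburger+)
  hence even: "((\<lambda>(i, j). reduced_term q i j) has_sum W0 * Y0) D0" using prod0 by simp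
  have "((\<lambda>x. - q * (\<lambda>(m, N). theta_term 1 (q^4) m * theta_coeff q 6 N) x) has_sum - q * (W1 * Y1)) (UNIV \<times> UNIV)
      \<longleftrightarrow> ((\<lambda>(i, j). reduced_term q i j) has_sum - q * (W1 * Y1)) D1"
    by (rule has_sum_reindex_bij_witness[where j="\<lambda>(m, N). (N + 1 - m, N + m)"
          and i="\<lambda>(i, j). ((j - i + 1) div 2, (i + j - 1) div 2)"])
       (auto simp: D1_def reduced_term_odd_class[OF \<open>q \<noteq> 0\<close>], presburger+)
  hence odd: "((\<lambda>(i, j). reduced_term q i j) has_sum - q * (W1 * Y1)) D1" using prod1 by simp
  have "D0 \<inter> D1 = {}" and union: "D0 \<union> D1 = UNIV" unfolding D0_def D1_def by auto
  hence "((\<lambda>(i, j). reduced_term q i j) has_sum W0 * Y0 + - q * (W1 * Y1)) (D0 \<union> D1)"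
    by (intro has_sum_Un_disjoint[OF even odd])
  thus ?thesis unfolding union W0_def W1_def Y0_def Y1_def .
qed

theorem mainTheorem17:
  fixes q :: complex
  assumes "0 < norm q" and "norm q < 1"
  shows "(1 / qpoch q ^ 3) *
      (\<Sum>\<^sub>\<infinity>(i, j, k) \<in> (UNIV :: (int \<times> int \<times> int) set).
         (-1) powi (i + j + k) * q powi (binom2 (i + j + k) + i^2 + j^2 + k^2))
    = qpoch_inf (q^4) (q^4) * qpoch_inf (q^20) (q^20) / qpoch q ^ 2 *
      (\<Sum>a\<in>{0..(1::nat)}. (-q) ^ a * qtheta (- (q ^ (2 - 2*a))) (q^4)
          * qtheta (q ^ (4 + 2*a)) (q^20) * qtheta (q ^ (12 - 4*a)) (q^40))"
proof -
  define P where "P = qpoch q"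
  have "P \<noteq> 0" unfolding P_def by (rule qpoch_nonzero[OF assms(2)])
  have "infsum (lhs_term q) UNIV / P
      = qpoch_inf (q^4) (q^4) * qtheta (- (q^2)) (q^4) * (qpoch_inf (q^20) (q^20) * qtheta (q^4) (q^20) * qtheta (q^12) (q^40))
      + - q * (qpoch_inf (q^4) (q^4) * qtheta (- 1) (q^4) * (qpoch_inf (q^20) (q^20) * qtheta (q^6) (q^20) * qtheta (q^8) (q^40)))"
    unfolding P_def using reduced_term_has_sum[OF assms] reduced_sum_dissection[OF assms] by (rule has_sum_unique)
  hence lhs: "infsum (lhs_term q) UNIV = P * qpoch_inf (q^4) (q^4) * qpoch_inf (q^20) (q^20) *
      (qtheta (- (q^2)) (q^4) * qtheta (q^4) (q^20) * qtheta (q^12) (q^40)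
       + - q * qtheta (- 1) (q^4) * qtheta (q^6) (q^20) * qtheta (q^8) (q^40))"
    using \<open>P \<noteq> 0\<close> by (simp add: field_simps)
  have rhs: "(\<Sum>a\<in>{0..(1::nat)}. (-q) ^ a * qtheta (- (q ^ (2 - 2*a))) (q^4)
          * qtheta (q ^ (4 + 2*a)) (q^20) * qtheta (q ^ (12 - 4*a)) (q^40))
      = qtheta (- (q^2)) (q^4) * qtheta (q^4) (q^20) * qtheta (q^12) (q^40)
        + - q * qtheta (- 1) (q^4) * qtheta (q^6) (q^20) * qtheta (q^8) (q^40)"
    by (simp add: atLeast0_atMost_Suc)
  show ?thesis
    unfolding lhs_term_def[symmetric] lhs rhs P_def[symmetric] using \<open>P \<noteq> 0\<close>
    by (simp add: field_simps power3_eq_cube power2_eq_square)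
qed

end
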